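(* If $S\subseteq\mathbb N^d$ is a PI-monoid, then $m(S)\in S\setminus\{0\}$. In particular, $m(S)=\min_{\preceq_{\mathbb N^d}}(S\setminus\{0\})$.
   Context: $\preceq_{\mathbb N^d}$ is the componentwise partial order on $\mathbb N^d$. For a submonoid $S$ of $\mathbb N^d$, its multiplicity is $m(S)=\inf_{\preceq_{\mathbb N^d}}(S\setminus\{0\})$. A submonoid $S$ of $\mathbb N^d$ is a PI-monoid if there exist a submonoid $T$ of $\mathbb N^d$ and $\mathbf a\in T\setminus\{0\}$ with $S=(\mathbf a+T)\cup\{0\}$. *)

theory Defs
  imports "HOL-Analysis.Finite_Cartesian_Product"
begin

text \<open>Elements of N^d are modelled as nat ^ 'd (a finite index type 'd, d = CARD('d)).
  The order \<le> on nat ^ 'd is the library's componentwise order (less_eq_vec_def).\<close>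

definition submonoid :: "(nat ^ 'd) set \<Rightarrow> bool" where
  "submonoid S \<longleftrightarrow> 0 \<in> S \<and> (\<forall>x\<in>S. \<forall>y\<in>S. x + y \<in> S)"

definition PI_monoid :: "(nat ^ 'd) set \<Rightarrow> bool" where
  "PI_monoid S \<longleftrightarrow> submonoid S \<and>
     (\<exists>T a. submonoid T \<and> a \<in> T - {0} \<and> S = ((\<lambda>t. a + t) ` T) \<union> {0})"

definition is_inf_cw :: "(nat ^ 'd) set \<Rightarrow> nat ^ 'd \<Rightarrow> bool" where
  "is_inf_cw A m \<longleftrightarrow> (\<forall>x\<in>A. m \<le> x) \<and> (\<forall>l. (\<forall>x\<in>A. l \<le> x) \<longrightarrow> l \<le> m)"

definition multiplicity :: "(nat ^ 'd) set \<Rightarrow> nat ^ 'd" where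
  "multiplicity S = (THE m. is_inf_cw (S - {0}) m)"

end

theory Submission
  imports Defs
begin

text \<open>Every nonzero element of (a + T) \<union> {0} has the form a + t, hence lies above a
  componentwise; and a = a + 0 itself is a nonzero element. So a is the least element
  of S - {0}, and a least element is in particular the infimum.\<close>

lemma is_inf_cw_least:
  assumes "m \<in> A" and "\<forall>x\<in>A. m \<le> x"
  shows "is_inf_cw A m"
  using assms unfolding is_inf_cw_def by blast

lemma is_inf_cw_unique:
  assumes "is_inf_cw A m" and "is_inf_cw A m'"
  shows "m = m'"
  using assms unfolding is_inf_cw_def by (blast intro: order.antisym)

lemma multiplicity_eq_least:
  assumes "m \<in> S - {0}" and "\<forall>x\<in>S - {0}. m \<le> x"
  shows "multiplicity S = m"
  unfolding multiplicity_def
  using is_inf_cw_least[OF assms] by (metis is_inf_cw_unique the_equality)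

lemma PI_monoid_least_element:
  fixes S :: "(nat ^ 'd) set"
  assumes "PI_monoid S"
  obtains a where "a \<in> S - {0}" and "\<forall>x\<in>S - {0}. a \<le> x"
proof -
  obtain T a where T: "submonoid T" "a \<in> T - {0}" and S: "S = (\<lambda>t. a + t) ` T \<union> {0}"
    using assms unfolding PI_monoid_def by blast
  have "a + 0 \<in> S" using T S unfolding submonoid_def by blast
  then have "a \<in> S - {0}" using T by simp
  moreover have "\<forall>x\<in>S - {0}. a \<le> x"
    using S by (auto simp: less_eq_vec_def)
  ultimately show thesis by (rule that)
qed

theorem lemma5p4:
  fixes S :: "(nat ^ 'd) set"
  assumes "PI_monoid S"
  shows "multiplicity S \<in> S - {0} \<and> (\<forall>x\<in>S - {0}. multiplicity S \<le> x)"
proof -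
  obtain a where "a \<in> S - {0}" and "\<forall>x\<in>S - {0}. a \<le> x"
    using PI_monoid_least_element[OF assms] .
  moreover from this have "multiplicity S = a" by (rule multiplicity_eq_least)
  ultimately show ?thesis by simp
qed

end
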